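(* Let $\mathbf k$ be an algebraically closed field of characteristic zero, $n\geq 1$, $\zeta\in\mathbf k$, and let $\mathcal D_{\zeta,n}$ be the monoidal category defined below. Let $k\in\mathbb N$ be divisible by $n$, say $k=ln$. Then $\mathrm{Hom}_{\mathcal D_{\zeta,n}}(k,0)$ is the $\mathbf k$-span of $f_n^{\otimes l}:k\to 0$.
   Context: $\mathcal D_{\zeta,n}$ is the strict $\mathbf k$-linear monoidal category whose objects are the natural numbers $k\in\mathbb N$ (thought of as $k$ points), with tensor product $k\otimes l=k+l$ on objects and unit $0$, and whose morphisms are generated under composition, tensor product and $\mathbf k$-linear combinations by the identity $\mathrm{id}_1$ of $1$ and two morphisms $f_n:n\to 0$ and $g_n:0\to n$, subject to the relations $f_n\circ g_n=\mathrm{id}_0$, $g_n\circ f_n=\mathrm{id}_n$, and $\mathrm{id}_1\otimes f_n=\zeta\,(f_n\otimes\mathrm{id}_1)$ as morphisms $n+1\to 1$. *)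

theory Defs
  imports "HOL-Computational_Algebra.Polynomial"
begin

text \<open>Syntactic presentation of the strict k-linear monoidal category D_{zeta,n}. F stands for f_n : n -> 0, G for g_n : 0 -> n,
  Id m for the identity of the object m (Id m is id_1 tensored m times, Id 0 the unit identity).
  Comp a b means a composed after b.\<close>

datatype 'k mexp =
    Id nat
  | F
  | G
  | Comp "'k mexp" "'k mexp"
  | Tens "'k mexp" "'k mexp"
  | Scal 'k "'k mexp"
  | Add "'k mexp" "'k mexp"
  | Zero nat nat

inductive typed :: "nat \<Rightarrow> 'k mexp \<Rightarrow> nat \<Rightarrow> nat \<Rightarrow> bool" for n :: nat where
  ty_id: "typed n (Id m) m m"
| ty_F: "typed n F n 0"
| ty_G: "typed n G 0 n"
| ty_comp: "typed n a y z \<Longrightarrow> typed n b x y \<Longrightarrow> typed n (Comp a b) x z"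
| ty_tens: "typed n a x y \<Longrightarrow> typed n b x' y' \<Longrightarrow> typed n (Tens a b) (x + x') (y + y')"
| ty_scal: "typed n a x y \<Longrightarrow> typed n (Scal c a) x y"
| ty_add: "typed n a x y \<Longrightarrow> typed n b x y \<Longrightarrow> typed n (Add a b) x y"
| ty_zero: "typed n (Zero x y) x y"

text \<open>eqv n \<zeta> a b x y: a and b are equal as morphisms x -> y of D_{\<zeta>,n}, i.e. the
  congruence generated by the axioms of a strict k-linear monoidal category and the
  defining relations of D_{\<zeta>,n}.\<close>
inductive eqv :: "nat \<Rightarrow> 'k::field \<Rightarrow> 'k mexp \<Rightarrow> 'k mexp \<Rightarrow> nat \<Rightarrow> nat \<Rightarrow> bool"
  for n :: nat and \<zeta> :: "'k::field" where
  e_refl: "typed n a x y \<Longrightarrow> eqv n \<zeta> a a x y"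
| e_sym: "eqv n \<zeta> a b x y \<Longrightarrow> eqv n \<zeta> b a x y"
| e_trans: "eqv n \<zeta> a b x y \<Longrightarrow> eqv n \<zeta> b c x y \<Longrightarrow> eqv n \<zeta> a c x y"
| e_comp: "eqv n \<zeta> a a' y z \<Longrightarrow> eqv n \<zeta> b b' x y \<Longrightarrow> eqv n \<zeta> (Comp a b) (Comp a' b') x z"
| e_tens: "eqv n \<zeta> a a' x y \<Longrightarrow> eqv n \<zeta> b b' x' y' \<Longrightarrow>
    eqv n \<zeta> (Tens a b) (Tens a' b') (x + x') (y + y')"
| e_scal: "eqv n \<zeta> a a' x y \<Longrightarrow> eqv n \<zeta> (Scal c a) (Scal c a') x y"
| e_add: "eqv n \<zeta> a a' x y \<Longrightarrow> eqv n \<zeta> b b' x y \<Longrightarrow> eqv n \<zeta> (Add a b) (Add a' b') x y"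
| e_comp_assoc: "typed n c w x \<Longrightarrow> typed n b x y \<Longrightarrow> typed n a y z \<Longrightarrow>
    eqv n \<zeta> (Comp (Comp a b) c) (Comp a (Comp b c)) w z"
| e_id_l: "typed n a x y \<Longrightarrow> eqv n \<zeta> (Comp (Id y) a) a x y"
| e_id_r: "typed n a x y \<Longrightarrow> eqv n \<zeta> (Comp a (Id x)) a x y"
| e_tens_assoc: "typed n a x y \<Longrightarrow> typed n b x' y' \<Longrightarrow> typed n c x'' y'' \<Longrightarrow>
    eqv n \<zeta> (Tens (Tens a b) c) (Tens a (Tens b c)) (x + x' + x'') (y + y' + y'')"
| e_unit_l: "typed n a x y \<Longrightarrow> eqv n \<zeta> (Tens (Id 0) a) a x y"
| e_unit_r: "typed n a x y \<Longrightarrow> eqv n \<zeta> (Tens a (Id 0)) a x y"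
| e_id_tens: "eqv n \<zeta> (Tens (Id m) (Id m')) (Id (m + m')) (m + m') (m + m')"
| e_interchange: "typed n a y z \<Longrightarrow> typed n b x y \<Longrightarrow> typed n c y' z' \<Longrightarrow> typed n d x' y' \<Longrightarrow>
    eqv n \<zeta> (Comp (Tens a c) (Tens b d)) (Tens (Comp a b) (Comp c d)) (x + x') (z + z')"
| e_add_assoc: "typed n a x y \<Longrightarrow> typed n b x y \<Longrightarrow> typed n c x y \<Longrightarrow>
    eqv n \<zeta> (Add (Add a b) c) (Add a (Add b c)) x y"
| e_add_comm: "typed n a x y \<Longrightarrow> typed n b x y \<Longrightarrow> eqv n \<zeta> (Add a b) (Add b a) x y"
| e_add_zero: "typed n a x y \<Longrightarrow> eqv n \<zeta> (Add a (Zero x y)) a x y"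
| e_add_inv: "typed n a x y \<Longrightarrow> eqv n \<zeta> (Add a (Scal (-1) a)) (Zero x y) x y"
| e_scal_one: "typed n a x y \<Longrightarrow> eqv n \<zeta> (Scal 1 a) a x y"
| e_scal_scal: "typed n a x y \<Longrightarrow> eqv n \<zeta> (Scal c (Scal d a)) (Scal (c * d) a) x y"
| e_scal_add: "typed n a x y \<Longrightarrow> typed n b x y \<Longrightarrow>
    eqv n \<zeta> (Scal c (Add a b)) (Add (Scal c a) (Scal c b)) x y"
| e_add_scal: "typed n a x y \<Longrightarrow> eqv n \<zeta> (Scal (c + d) a) (Add (Scal c a) (Scal d a)) x y"
| e_comp_add_l: "typed n a y z \<Longrightarrow> typed n a' y z \<Longrightarrow> typed n b x y \<Longrightarrow>
    eqv n \<zeta> (Comp (Add a a') b) (Add (Comp a b) (Comp a' b)) x z"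
| e_comp_add_r: "typed n a y z \<Longrightarrow> typed n b x y \<Longrightarrow> typed n b' x y \<Longrightarrow>
    eqv n \<zeta> (Comp a (Add b b')) (Add (Comp a b) (Comp a b')) x z"
| e_comp_scal_l: "typed n a y z \<Longrightarrow> typed n b x y \<Longrightarrow>
    eqv n \<zeta> (Comp (Scal c a) b) (Scal c (Comp a b)) x z"
| e_comp_scal_r: "typed n a y z \<Longrightarrow> typed n b x y \<Longrightarrow>
    eqv n \<zeta> (Comp a (Scal c b)) (Scal c (Comp a b)) x z"
| e_tens_add_l: "typed n a x y \<Longrightarrow> typed n a' x y \<Longrightarrow> typed n b x' y' \<Longrightarrow>
    eqv n \<zeta> (Tens (Add a a') b) (Add (Tens a b) (Tens a' b)) (x + x') (y + y')"
| e_tens_add_r: "typed n a x y \<Longrightarrow> typed n b x' y' \<Longrightarrow> typed n b' x' y' \<Longrightarrow>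
    eqv n \<zeta> (Tens a (Add b b')) (Add (Tens a b) (Tens a b')) (x + x') (y + y')"
| e_tens_scal_l: "typed n a x y \<Longrightarrow> typed n b x' y' \<Longrightarrow>
    eqv n \<zeta> (Tens (Scal c a) b) (Scal c (Tens a b)) (x + x') (y + y')"
| e_tens_scal_r: "typed n a x y \<Longrightarrow> typed n b x' y' \<Longrightarrow>
    eqv n \<zeta> (Tens a (Scal c b)) (Scal c (Tens a b)) (x + x') (y + y')"
  (* defining relations of D_{\<zeta>,n} *)
| e_fg: "eqv n \<zeta> (Comp F G) (Id 0) 0 0"
| e_gf: "eqv n \<zeta> (Comp G F) (Id n) n n"
| e_twist: "eqv n \<zeta> (Tens (Id 1) F) (Scal \<zeta> (Tens F (Id 1))) (n + 1) 1"

fun fpow :: "nat \<Rightarrow> 'k mexp" where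
  "fpow 0 = Id 0"
| "fpow (Suc l) = Tens F (fpow l)"

end

theory Submission
  imports Defs
begin

(* Every object x is isomorphic to its residue x mod n, through
   to_residue x = f_n^(x div n) \<otimes> id_(x mod n), whose inverse from_residue x is built from g_n.
   Hence Hom(x, y) is spanned by the single morphism canonical x y, the composite
   x -> x mod n -> y when x and y have the same residue, and zero otherwise. Closure under composition is the cancellation
   to_residue y o from_residue y = id. A tensor product factors as a \<otimes> b = (a \<otimes> id) o (id \<otimes> b),
   so it suffices to tensor canonical morphisms with identities: on the right this is a
   reassociation, on the left the relation id_1 \<otimes> f_n = \<zeta> (f_n \<otimes> id_1) moves identities past
   f_n, and past its inverse g_n, at the cost of a scalar. For k = l n the canonical morphism
   k -> 0 is f_n^(l). *)

section \<open>Typing of morphism expressions\<close>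

inductive_cases typed_IdE: "typed n (Id m) x y"
inductive_cases typed_FE: "typed n F x y"
inductive_cases typed_GE: "typed n G x y"
inductive_cases typed_CompE: "typed n (Comp a b) x z"
inductive_cases typed_TensE: "typed n (Tens a b) x y"
inductive_cases typed_ScalE: "typed n (Scal c a) x y"
inductive_cases typed_AddE: "typed n (Add a b) x y"
inductive_cases typed_ZeroE: "typed n (Zero x' y') x y"

lemma typed_unique: "typed n e x y \<Longrightarrow> typed n e x' y' \<Longrightarrow> x' = x \<and> y' = y"
  by (induction arbitrary: x' y' rule: typed.induct)
    (blast elim: typed_IdE typed_FE typed_GE typed_CompE typed_TensE typed_ScalE typed_AddE typed_ZeroE)+

lemma eqv_typed: "eqv n \<zeta> a b x y \<Longrightarrow> typed n a x y \<and> typed n b x y"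
proof (induction rule: eqv.induct)
  case (e_tens_assoc a x y b x' y' c x'' y'')
  then show ?case by (metis add.assoc typed.ty_tens)
next
  case (e_unit_l a x y)
  then show ?case by (metis add_0 typed.ty_id typed.ty_tens)
next
  case (e_unit_r a x y)
  then show ?case by (metis add_0_right typed.ty_id typed.ty_tens)
next
  case (e_twist)
  then show ?case by (metis add.commute add_0_right typed.ty_F typed.ty_id typed.ty_tens typed.ty_scal)
qed (auto intro: typed.intros)

fun tpow :: "'k mexp \<Rightarrow> nat \<Rightarrow> 'k mexp" where
  "tpow X 0 = Id 0"
| "tpow X (Suc a) = Tens X (tpow X a)"

lemma fpow_eq_tpow: "fpow l = tpow F l"
  by (induction l) auto

lemma typed_tpow: "typed n X p q \<Longrightarrow> typed n (tpow X a) (a * p) (a * q)"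
  by (induction a) (auto intro: typed.intros)

lemma typed_F_pow: "typed n (tpow F a) (a * n) 0"
  using typed_tpow[OF typed.ty_F] by simp

lemma typed_G_pow: "typed n (tpow G a) 0 (a * n)"
  using typed_tpow[OF typed.ty_G] by simp

section \<open>Equality and proportionality of morphisms\<close>

locale D_category =
  fixes n :: nat and \<zeta> :: "'k::field"
begin

(* Typing is unique (typed_unique), so the objects of eqv can be left implicit; this is what
   makes calculational reasoning with \<approx> and \<propto> possible. *)
definition mor_eq :: "'k mexp \<Rightarrow> 'k mexp \<Rightarrow> bool" (infix "\<approx>" 50) where
  "a \<approx> b \<longleftrightarrow> (\<exists>x y. eqv n \<zeta> a b x y)"

lemma eqv_imp_mor_eq: "eqv n \<zeta> a b x y \<Longrightarrow> a \<approx> b"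
  unfolding mor_eq_def by blast

lemma eqv_iff_mor_eq: "eqv n \<zeta> a b x y \<longleftrightarrow> a \<approx> b \<and> typed n a x y"
proof
  assume "eqv n \<zeta> a b x y"
  then show "a \<approx> b \<and> typed n a x y"
    using eqv_imp_mor_eq eqv_typed by blast
next
  assume "a \<approx> b \<and> typed n a x y"
  then obtain x' y' where eq: "eqv n \<zeta> a b x' y'" and "typed n a x y"
    unfolding mor_eq_def by blast
  then have "x' = x \<and> y' = y"
    using eqv_typed typed_unique by blast
  then show "eqv n \<zeta> a b x y"
    using eq by simp
qed

lemma mor_eq_typed: "a \<approx> b \<Longrightarrow> typed n a x y \<longleftrightarrow> typed n b x y"
  by (metis eqv_iff_mor_eq eqv_typed mor_eq_def typed_unique)

lemma mor_eq_refl: "typed n a x y \<Longrightarrow> a \<approx> a"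
  using eqv.e_refl eqv_imp_mor_eq by blast

lemma mor_eq_sym: "a \<approx> b \<Longrightarrow> b \<approx> a"
  unfolding mor_eq_def using eqv.e_sym by blast

lemma mor_eq_trans [trans]:
  assumes "a \<approx> b" and "b \<approx> c"
  shows "a \<approx> c"
proof -
  obtain x y where ab: "eqv n \<zeta> a b x y"
    using assms(1) unfolding mor_eq_def by blast
  then have "eqv n \<zeta> b c x y"
    using assms(2) eqv_iff_mor_eq eqv_typed by blast
  with ab show ?thesis
    using eqv.e_trans eqv_imp_mor_eq by blast
qed

lemma mor_eq_comp:
  assumes "a \<approx> a'" and "b \<approx> b'" and "typed n (Comp a b) x z"
  shows "Comp a b \<approx> Comp a' b'"
  using assms(3)
proof (rule typed_CompE)
  fix y
  assume "typed n a y z" and "typed n b x y"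
  with assms(1,2) show ?thesis
    using eqv.e_comp eqv_iff_mor_eq by blast
qed

lemma mor_eq_tens: "a \<approx> a' \<Longrightarrow> b \<approx> b' \<Longrightarrow> Tens a b \<approx> Tens a' b'"
  unfolding mor_eq_def using eqv.e_tens by blast

lemma mor_eq_scal: "a \<approx> a' \<Longrightarrow> Scal c a \<approx> Scal c a'"
  unfolding mor_eq_def using eqv.e_scal by blast

lemma mor_eq_add:
  assumes "a \<approx> a'" and "b \<approx> b'" and "typed n a x y" and "typed n b x y"
  shows "Add a b \<approx> Add a' b'"
  using assms eqv.e_add eqv_iff_mor_eq by blast

lemmas mor_eq_comp_assoc = eqv.e_comp_assoc[THEN eqv_imp_mor_eq]
  and mor_eq_id_left = eqv.e_id_l[THEN eqv_imp_mor_eq]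
  and mor_eq_id_right = eqv.e_id_r[THEN eqv_imp_mor_eq]
  and mor_eq_tens_assoc = eqv.e_tens_assoc[THEN eqv_imp_mor_eq]
  and mor_eq_unit_left = eqv.e_unit_l[THEN eqv_imp_mor_eq]
  and mor_eq_unit_right = eqv.e_unit_r[THEN eqv_imp_mor_eq]
  and mor_eq_id_tens = eqv.e_id_tens[THEN eqv_imp_mor_eq]
  and mor_eq_interchange = eqv.e_interchange[THEN eqv_imp_mor_eq]
  and mor_eq_add_inv = eqv.e_add_inv[THEN eqv_imp_mor_eq]
  and mor_eq_scal_one = eqv.e_scal_one[THEN eqv_imp_mor_eq]
  and mor_eq_scal_scal = eqv.e_scal_scal[THEN eqv_imp_mor_eq]
  and mor_eq_add_scal = eqv.e_add_scal[THEN eqv_imp_mor_eq]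
  and mor_eq_comp_scal_left = eqv.e_comp_scal_l[THEN eqv_imp_mor_eq]
  and mor_eq_comp_scal_right = eqv.e_comp_scal_r[THEN eqv_imp_mor_eq]
  and mor_eq_tens_scal_left = eqv.e_tens_scal_l[THEN eqv_imp_mor_eq]
  and mor_eq_tens_scal_right = eqv.e_tens_scal_r[THEN eqv_imp_mor_eq]
  and mor_eq_fg = eqv.e_fg[THEN eqv_imp_mor_eq]
  and mor_eq_gf = eqv.e_gf[THEN eqv_imp_mor_eq]
  and mor_eq_twist = eqv.e_twist[THEN eqv_imp_mor_eq]

definition scalar_multiple :: "'k mexp \<Rightarrow> 'k mexp \<Rightarrow> bool" (infix "\<propto>" 50) where
  "a \<propto> b \<longleftrightarrow> (\<exists>c. a \<approx> Scal c b)"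

lemma multiple_typed:
  assumes "a \<propto> b"
  shows "typed n a x y \<longleftrightarrow> typed n b x y"
proof -
  obtain c where "a \<approx> Scal c b"
    using assms unfolding scalar_multiple_def by blast
  then have "typed n a x y \<longleftrightarrow> typed n (Scal c b) x y"
    by (rule mor_eq_typed)
  also have "\<dots> \<longleftrightarrow> typed n b x y"
    using typed.ty_scal typed_ScalE by metis
  finally show ?thesis .
qed

lemma multiple_typed_ex:
  assumes "a \<propto> b"
  obtains x y where "typed n a x y" and "typed n b x y"
proof -
  obtain c x y where "eqv n \<zeta> a (Scal c b) x y"
    using assms unfolding scalar_multiple_def mor_eq_def by blast
  then have "typed n a x y" and "typed n b x y"
    using eqv_typed typed_ScalE by metis+
  then show ?thesis
    by (rule that)
qed

lemma multiple_Tens_typed: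
  assumes "Tens a b \<propto> c"
  shows "\<exists>x y x' y'. typed n a x y \<and> typed n b x' y'"
proof -
  obtain x y where "typed n (Tens a b) x y"
    using assms by (rule multiple_typed_ex)
  then show ?thesis
    by (rule typed_TensE) blast
qed

lemma mor_eq_imp_multiple:
  assumes "a \<approx> b"
  shows "a \<propto> b"
proof -
  obtain x y where b: "typed n b x y"
    using assms eqv_typed unfolding mor_eq_def by blast
  have "b \<approx> Scal 1 b"
    using mor_eq_scal_one[OF b] by (rule mor_eq_sym)
  with assms have "a \<approx> Scal 1 b"
    by (rule mor_eq_trans)
  then show ?thesis
    unfolding scalar_multiple_def by blast
qed

lemma multiple_refl: "typed n a x y \<Longrightarrow> a \<propto> a"
  by (rule mor_eq_imp_multiple[OF mor_eq_refl])

lemma scal_multiple: "typed n a x y \<Longrightarrow> Scal c a \<propto> a"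
  unfolding scalar_multiple_def by (blast intro: mor_eq_refl[OF typed.ty_scal])

lemma multiple_trans [trans]:
  assumes "a \<propto> b" and "b \<propto> c"
  shows "a \<propto> c"
proof -
  obtain s t where s: "a \<approx> Scal s b" and t: "b \<approx> Scal t c"
    using assms unfolding scalar_multiple_def by blast
  obtain x y where "typed n b x y"
    using assms(2) by (rule multiple_typed_ex)
  then have c: "typed n c x y"
    using mor_eq_typed[OF t] typed_ScalE by metis
  have "a \<approx> Scal s (Scal t c)"
    using s mor_eq_scal[OF t] by (rule mor_eq_trans)
  also have "\<dots> \<approx> Scal (s * t) c"
    using c by (rule mor_eq_scal_scal)
  finally show ?thesis
    unfolding scalar_multiple_def by blast
qed

lemma mor_eq_multiple_trans [trans]: "a \<approx> b \<Longrightarrow> b \<propto> c \<Longrightarrow> a \<propto> c"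
  by (rule multiple_trans[OF mor_eq_imp_multiple])

lemma multiple_mor_eq_trans [trans]: "a \<propto> b \<Longrightarrow> b \<approx> c \<Longrightarrow> a \<propto> c"
  by (erule multiple_trans[OF _ mor_eq_imp_multiple])

lemma multiple_comp:
  assumes "a \<propto> a'" and "b \<propto> b'" and "typed n (Comp a b) x z"
  shows "Comp a b \<propto> Comp a' b'"
proof -
  obtain s t where s: "a \<approx> Scal s a'" and t: "b \<approx> Scal t b'"
    using assms(1,2) unfolding scalar_multiple_def by blast
  obtain y where "typed n a y z" "typed n b x y"
    using assms(3) by (rule typed_CompE)
  then have a': "typed n a' y z" and b': "typed n b' x y"
    using multiple_typed[OF assms(1)] multiple_typed[OF assms(2)] by simp_all
  have "Comp a b \<approx> Comp (Scal s a') (Scal t b')"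
    using s t assms(3) by (rule mor_eq_comp)
  also have "\<dots> \<approx> Scal s (Comp a' (Scal t b'))"
    using a' typed.ty_scal[OF b'] by (rule mor_eq_comp_scal_left)
  also have "\<dots> \<approx> Scal s (Scal t (Comp a' b'))"
    using a' b' by (intro mor_eq_scal mor_eq_comp_scal_right)
  also have "\<dots> \<approx> Scal (s * t) (Comp a' b')"
    using typed.ty_comp[OF a' b'] by (rule mor_eq_scal_scal)
  finally show ?thesis
    unfolding scalar_multiple_def by blast
qed

lemma multiple_tens:
  assumes "a \<propto> a'" and "b \<propto> b'"
  shows "Tens a b \<propto> Tens a' b'"
proof -
  obtain s t where s: "a \<approx> Scal s a'" and t: "b \<approx> Scal t b'"
    using assms unfolding scalar_multiple_def by blast
  obtain x y x' y' where a': "typed n a' x y" and b': "typed n b' x' y'"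
    using multiple_typed_ex[OF assms(1)] multiple_typed_ex[OF assms(2)] by metis
  have "Tens a b \<approx> Tens (Scal s a') (Scal t b')"
    using s t by (rule mor_eq_tens)
  also have "\<dots> \<approx> Scal s (Tens a' (Scal t b'))"
    using a' typed.ty_scal[OF b'] by (rule mor_eq_tens_scal_left)
  also have "\<dots> \<approx> Scal s (Scal t (Tens a' b'))"
    using a' b' by (intro mor_eq_scal mor_eq_tens_scal_right)
  also have "\<dots> \<approx> Scal (s * t) (Tens a' b')"
    using typed.ty_tens[OF a' b'] by (rule mor_eq_scal_scal)
  finally show ?thesis
    unfolding scalar_multiple_def by blast
qed

lemma multiple_add:
  assumes "a \<propto> w" and "b \<propto> w"
  shows "Add a b \<propto> w"
proof -
  obtain s t where s: "a \<approx> Scal s w" and t: "b \<approx> Scal t w"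
    using assms unfolding scalar_multiple_def by blast
  obtain x y where w: "typed n w x y"
    using assms(1) by (rule multiple_typed_ex)
  then have "typed n a x y" and "typed n b x y"
    using multiple_typed[OF assms(1)] multiple_typed[OF assms(2)] by simp_all
  with s t have "Add a b \<approx> Add (Scal s w) (Scal t w)"
    by (rule mor_eq_add)
  also have "\<dots> \<approx> Scal (s + t) w"
    using w by (rule mor_eq_sym[OF mor_eq_add_scal])
  finally show ?thesis
    unfolding scalar_multiple_def by blast
qed

lemma scal_zero:
  assumes a: "typed n a x y"
  shows "Scal 0 a \<approx> Zero x y"
proof -
  have "Scal 0 a \<approx> Add (Scal 1 a) (Scal (-1) a)"
    using mor_eq_add_scal[OF a, of 1 "-1"] by simp
  also have "\<dots> \<approx> Add a (Scal (-1) a)"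
    using mor_eq_scal_one[OF a] mor_eq_refl[OF typed.ty_scal[OF a]] typed.ty_scal[OF a] typed.ty_scal[OF a]
    by (rule mor_eq_add)
  also have "\<dots> \<approx> Zero x y"
    using a by (rule mor_eq_add_inv)
  finally show ?thesis .
qed

lemma scal_eq_inverse:
  assumes ab: "a \<approx> Scal c b" and "c \<noteq> 0"
  shows "b \<approx> Scal (inverse c) a"
proof -
  have "a \<propto> b"
    using ab unfolding scalar_multiple_def by blast
  then obtain x y where b: "typed n b x y"
    by (rule multiple_typed_ex)
  have "Scal (inverse c) a \<approx> Scal (inverse c) (Scal c b)"
    using ab by (rule mor_eq_scal)
  also have "\<dots> \<approx> Scal 1 b"
    using mor_eq_scal_scal[OF b, of "inverse c" c] \<open>c \<noteq> 0\<close> by simp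
  also have "\<dots> \<approx> b"
    using b by (rule mor_eq_scal_one)
  finally show ?thesis
    by (rule mor_eq_sym)
qed

lemma Zero_multiple: "typed n w x y \<Longrightarrow> Zero x y \<propto> w"
  unfolding scalar_multiple_def by (blast intro: mor_eq_sym[OF scal_zero])

lemma comp_Zero_right:
  assumes a: "typed n a y z"
  shows "Comp a (Zero x y) \<approx> Zero x z"
proof -
  have "Comp a (Zero x y) \<approx> Comp a (Scal 0 (Zero x y))"
    using mor_eq_refl[OF a] mor_eq_sym[OF scal_zero[OF typed.ty_zero]] typed.ty_comp[OF a typed.ty_zero]
    by (rule mor_eq_comp)
  also have "\<dots> \<approx> Scal 0 (Comp a (Zero x y))"
    using a typed.ty_zero by (rule mor_eq_comp_scal_right)
  also have "\<dots> \<approx> Zero x z"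
    by (rule scal_zero[OF typed.ty_comp[OF a typed.ty_zero]])
  finally show ?thesis .
qed

lemma comp_Zero_left:
  assumes b: "typed n b x y"
  shows "Comp (Zero y z) b \<approx> Zero x z"
proof -
  have "Comp (Zero y z) b \<approx> Comp (Scal 0 (Zero y z)) b"
    using mor_eq_sym[OF scal_zero[OF typed.ty_zero]] mor_eq_refl[OF b] typed.ty_comp[OF typed.ty_zero b]
    by (rule mor_eq_comp)
  also have "\<dots> \<approx> Scal 0 (Comp (Zero y z) b)"
    using typed.ty_zero b by (rule mor_eq_comp_scal_left)
  also have "\<dots> \<approx> Zero x z"
    by (rule scal_zero[OF typed.ty_comp[OF typed.ty_zero b]])
  finally show ?thesis .
qed

lemma tens_Zero_right:
  assumes a: "typed n a x y"
  shows "Tens a (Zero x' y') \<approx> Zero (x + x') (y + y')"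
proof -
  have "Tens a (Zero x' y') \<approx> Tens a (Scal 0 (Zero x' y'))"
    using mor_eq_refl[OF a] mor_eq_sym[OF scal_zero[OF typed.ty_zero]] by (rule mor_eq_tens)
  also have "\<dots> \<approx> Scal 0 (Tens a (Zero x' y'))"
    using a typed.ty_zero by (rule mor_eq_tens_scal_right)
  also have "\<dots> \<approx> Zero (x + x') (y + y')"
    by (rule scal_zero[OF typed.ty_tens[OF a typed.ty_zero]])
  finally show ?thesis .
qed

lemma tens_Zero_left:
  assumes b: "typed n b x' y'"
  shows "Tens (Zero x y) b \<approx> Zero (x + x') (y + y')"
proof -
  have "Tens (Zero x y) b \<approx> Tens (Scal 0 (Zero x y)) b"
    using mor_eq_sym[OF scal_zero[OF typed.ty_zero]] mor_eq_refl[OF b] by (rule mor_eq_tens)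
  also have "\<dots> \<approx> Scal 0 (Tens (Zero x y) b)"
    using typed.ty_zero b by (rule mor_eq_tens_scal_left)
  also have "\<dots> \<approx> Zero (x + x') (y + y')"
    by (rule scal_zero[OF typed.ty_tens[OF typed.ty_zero b]])
  finally show ?thesis .
qed

section \<open>Tensor powers and commuting identities\<close>

lemma tens_comp_id_right:
  assumes "typed n a y z" and "typed n b x y"
  shows "Comp (Tens a (Id m)) (Tens b (Id m)) \<approx> Tens (Comp a b) (Id m)"
proof -
  have "Comp (Tens a (Id m)) (Tens b (Id m)) \<approx> Tens (Comp a b) (Comp (Id m) (Id m))"
    using assms typed.ty_id typed.ty_id by (rule mor_eq_interchange)
  also have "\<dots> \<approx> Tens (Comp a b) (Id m)"
    using mor_eq_refl[OF typed.ty_comp[OF assms]] mor_eq_id_left[OF typed.ty_id]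
    by (rule mor_eq_tens)
  finally show ?thesis .
qed

lemma tens_comp_id_left:
  assumes "typed n a y z" and "typed n b x y"
  shows "Comp (Tens (Id m) a) (Tens (Id m) b) \<approx> Tens (Id m) (Comp a b)"
proof -
  have "Comp (Tens (Id m) a) (Tens (Id m) b) \<approx> Tens (Comp (Id m) (Id m)) (Comp a b)"
    using typed.ty_id typed.ty_id assms by (rule mor_eq_interchange)
  also have "\<dots> \<approx> Tens (Id m) (Comp a b)"
    using mor_eq_id_left[OF typed.ty_id] mor_eq_refl[OF typed.ty_comp[OF assms]]
    by (rule mor_eq_tens)
  finally show ?thesis .
qed

lemma tens_eq_comp:
  assumes "typed n a x y" and "typed n b x' y'"
  shows "Tens a b \<approx> Comp (Tens a (Id y')) (Tens (Id x) b)"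
proof -
  have "Comp (Tens a (Id y')) (Tens (Id x) b) \<approx> Tens (Comp a (Id x)) (Comp (Id y') b)"
    using assms(1) typed.ty_id typed.ty_id assms(2) by (rule mor_eq_interchange)
  also have "\<dots> \<approx> Tens a b"
    using mor_eq_id_right[OF assms(1)] mor_eq_id_left[OF assms(2)] by (rule mor_eq_tens)
  finally show ?thesis
    by (rule mor_eq_sym)
qed

lemma tens_id_inverse:
  assumes A: "typed n A x y" and B: "typed n B y x" and AB: "Comp A B \<approx> Id y"
  shows "Comp (Tens (Id m) A) (Tens (Id m) B) \<approx> Id (m + y)"
    and "Comp (Tens A (Id m)) (Tens B (Id m)) \<approx> Id (m + y)"
proof -
  have "Comp (Tens (Id m) A) (Tens (Id m) B) \<approx> Tens (Id m) (Comp A B)"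
    using A B by (rule tens_comp_id_left)
  also have "\<dots> \<approx> Tens (Id m) (Id y)"
    using mor_eq_refl[OF typed.ty_id] AB by (rule mor_eq_tens)
  also have "\<dots> \<approx> Id (m + y)"
    by (rule mor_eq_id_tens)
  finally show "Comp (Tens (Id m) A) (Tens (Id m) B) \<approx> Id (m + y)" .
  have "Comp (Tens A (Id m)) (Tens B (Id m)) \<approx> Tens (Comp A B) (Id m)"
    using A B by (rule tens_comp_id_right)
  also have "\<dots> \<approx> Tens (Id y) (Id m)"
    using AB mor_eq_refl[OF typed.ty_id] by (rule mor_eq_tens)
  also have "\<dots> \<approx> Id (m + y)"
    using mor_eq_id_tens[of y m] by (simp add: add.commute)
  finally show "Comp (Tens A (Id m)) (Tens B (Id m)) \<approx> Id (m + y)" .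
qed

lemma Zero_if_inverse_Zero:
  assumes a: "typed n a x y" and b: "typed n b y x"
    and ba: "Comp b a \<approx> Id x" and a0: "a \<approx> Zero x y"
  shows "b \<approx> Zero y x"
proof -
  have "b \<approx> Comp (Id x) b"
    using mor_eq_id_left[OF b] by (rule mor_eq_sym)
  also have "\<dots> \<approx> Comp (Comp b a) b"
    using mor_eq_sym[OF ba] mor_eq_refl[OF b] typed.ty_comp[OF typed.ty_id b] by (rule mor_eq_comp)
  also have "\<dots> \<approx> Comp (Comp b (Zero x y)) b"
    using mor_eq_comp[OF mor_eq_refl[OF b] a0 typed.ty_comp[OF b a]] mor_eq_refl[OF b]
      typed.ty_comp[OF typed.ty_comp[OF b a] b]
    by (rule mor_eq_comp)
  also have "\<dots> \<approx> Comp (Zero x x) b"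
    using comp_Zero_right[OF b] mor_eq_refl[OF b] typed.ty_comp[OF typed.ty_comp[OF b typed.ty_zero] b]
    by (rule mor_eq_comp)
  also have "\<dots> \<approx> Zero y x"
    using b by (rule comp_Zero_left)
  finally show ?thesis .
qed

lemma tpow_add:
  assumes X: "typed n X p q"
  shows "Tens (tpow X a) (tpow X b) \<approx> tpow X (a + b)"
proof (induction a)
  case 0
  show ?case
    using mor_eq_unit_left[OF typed_tpow[OF X]] by simp
next
  case (Suc a)
  have "Tens (tpow X (Suc a)) (tpow X b) \<approx> Tens X (Tens (tpow X a) (tpow X b))"
    using mor_eq_tens_assoc[OF X typed_tpow[OF X] typed_tpow[OF X]] by simp
  also have "\<dots> \<approx> Tens X (tpow X (a + b))"
    using mor_eq_refl[OF X] Suc.IH by (rule mor_eq_tens)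
  finally show ?case
    by simp
qed

lemma tpow_comp_tpow:
  assumes X: "typed n X p q" and Y: "typed n Y q p" and XY: "Comp X Y \<approx> Id q"
  shows "Comp (tpow X a) (tpow Y a) \<approx> Id (a * q)"
proof (induction a)
  case 0
  show ?case
    using mor_eq_id_left[OF typed.ty_id] by simp
next
  case (Suc a)
  have "Comp (tpow X (Suc a)) (tpow Y (Suc a)) \<approx> Tens (Comp X Y) (Comp (tpow X a) (tpow Y a))"
    using mor_eq_interchange[OF X Y typed_tpow[OF X] typed_tpow[OF Y]] by simp
  also have "\<dots> \<approx> Tens (Id q) (Id (a * q))"
    using XY Suc.IH by (rule mor_eq_tens)
  also have "\<dots> \<approx> Id (Suc a * q)"
    using mor_eq_id_tens by simp
  finally show ?case .
qed

lemma tpow_tens_tpow_tens_id: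
  assumes X: "typed n X p q"
  shows "Tens (tpow X a) (Tens (tpow X b) (Id r)) \<approx> Tens (tpow X (a + b)) (Id r)"
proof -
  have "Tens (tpow X a) (Tens (tpow X b) (Id r)) \<approx> Tens (Tens (tpow X a) (tpow X b)) (Id r)"
    using typed_tpow[OF X] typed_tpow[OF X] typed.ty_id
    by (rule mor_eq_sym[OF mor_eq_tens_assoc])
  also have "\<dots> \<approx> Tens (tpow X (a + b)) (Id r)"
    using tpow_add[OF X] mor_eq_refl[OF typed.ty_id] by (rule mor_eq_tens)
  finally show ?thesis .
qed

lemma tpow_tens_id_tens_id:
  assumes X: "typed n X p q"
  shows "Tens (Tens (tpow X a) (Id r)) (Id m) \<approx> Tens (tpow X a) (Id (r + m))"
proof -
  have "Tens (Tens (tpow X a) (Id r)) (Id m) \<approx> Tens (tpow X a) (Tens (Id r) (Id m))"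
    using typed_tpow[OF X] typed.ty_id typed.ty_id by (rule mor_eq_tens_assoc)
  also have "\<dots> \<approx> Tens (tpow X a) (Id (r + m))"
    using mor_eq_refl[OF typed_tpow[OF X]] mor_eq_id_tens by (rule mor_eq_tens)
  finally show ?thesis .
qed

lemma commute_tens_left:
  assumes AX: "Tens A X \<propto> Tens X A" and BX: "Tens B X \<propto> Tens X B"
  shows "Tens (Tens A B) X \<propto> Tens X (Tens A B)"
proof -
  obtain xa ya xx yx xb yb where A: "typed n A xa ya" and X: "typed n X xx yx" and B: "typed n B xb yb"
    using multiple_Tens_typed[OF AX] multiple_Tens_typed[OF BX] by blast
  have "Tens (Tens A B) X \<approx> Tens A (Tens B X)"
    using A B X by (rule mor_eq_tens_assoc)
  also have "\<dots> \<propto> Tens A (Tens X B)"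
    using multiple_refl[OF A] BX by (rule multiple_tens)
  also have "\<dots> \<approx> Tens (Tens A X) B"
    using A X B by (rule mor_eq_sym[OF mor_eq_tens_assoc])
  also have "\<dots> \<propto> Tens (Tens X A) B"
    using AX multiple_refl[OF B] by (rule multiple_tens)
  also have "\<dots> \<approx> Tens X (Tens A B)"
    using X A B by (rule mor_eq_tens_assoc)
  finally show ?thesis .
qed

lemma commute_tens_right:
  assumes AX: "Tens A X \<propto> Tens X A" and AY: "Tens A Y \<propto> Tens Y A"
  shows "Tens A (Tens X Y) \<propto> Tens (Tens X Y) A"
proof -
  obtain xa ya xx yx xy yy where A: "typed n A xa ya" and X: "typed n X xx yx" and Y: "typed n Y xy yy"
    using multiple_Tens_typed[OF AX] multiple_Tens_typed[OF AY] by blast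
  have "Tens A (Tens X Y) \<approx> Tens (Tens A X) Y"
    using A X Y by (rule mor_eq_sym[OF mor_eq_tens_assoc])
  also have "\<dots> \<propto> Tens (Tens X A) Y"
    using AX multiple_refl[OF Y] by (rule multiple_tens)
  also have "\<dots> \<approx> Tens X (Tens A Y)"
    using X A Y by (rule mor_eq_tens_assoc)
  also have "\<dots> \<propto> Tens X (Tens Y A)"
    using multiple_refl[OF X] AY by (rule multiple_tens)
  also have "\<dots> \<approx> Tens (Tens X Y) A"
    using X Y A by (rule mor_eq_sym[OF mor_eq_tens_assoc])
  finally show ?thesis .
qed

lemma id_tens_commute:
  assumes X1: "Tens (Id 1) X \<propto> Tens X (Id 1)"
  shows "Tens (Id m) X \<propto> Tens X (Id m)"
proof -
  obtain p q where X: "typed n X p q"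
    using multiple_Tens_typed[OF X1] by blast
  show ?thesis
  proof (induction m)
    case 0
    have "Tens (Id 0) X \<approx> X"
      using X by (rule mor_eq_unit_left)
    also have "\<dots> \<approx> Tens X (Id 0)"
      using X by (rule mor_eq_sym[OF mor_eq_unit_right])
    finally show ?case
      by (rule mor_eq_imp_multiple)
  next
    case (Suc m)
    have id: "Tens (Id 1) (Id m) \<approx> Id (Suc m)"
      using mor_eq_id_tens[of 1 m] by simp
    have "Tens (Id (Suc m)) X \<approx> Tens (Tens (Id 1) (Id m)) X"
      using mor_eq_sym[OF id] mor_eq_refl[OF X] by (rule mor_eq_tens)
    also have "\<dots> \<propto> Tens X (Tens (Id 1) (Id m))"
      using X1 Suc.IH by (rule commute_tens_left)
    also have "\<dots> \<approx> Tens X (Id (Suc m))"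
      using mor_eq_refl[OF X] id by (rule mor_eq_tens)
    finally show ?case .
  qed
qed

lemma id_tens_tpow_commute:
  assumes Xm: "Tens (Id m) X \<propto> Tens X (Id m)"
  shows "Tens (Id m) (tpow X a) \<propto> Tens (tpow X a) (Id m)"
proof (induction a)
  case 0
  have "Tens (Id m) (Id 0) \<approx> Id m"
    using typed.ty_id by (rule mor_eq_unit_right)
  also have "\<dots> \<approx> Tens (Id 0) (Id m)"
    using typed.ty_id by (rule mor_eq_sym[OF mor_eq_unit_left])
  finally show ?case
    by (simp add: mor_eq_imp_multiple)
next
  case (Suc a)
  show ?case
    using commute_tens_right[OF Xm Suc.IH] by simp
qed

lemma id_tens_tpow_tens_id:
  assumes Xm: "Tens (Id m) X \<propto> Tens X (Id m)"
  shows "Tens (Id m) (Tens (tpow X a) (Id r)) \<propto> Tens (tpow X a) (Id (m + r))"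
proof -
  obtain p q where X: "typed n X p q"
    using multiple_Tens_typed[OF Xm] by blast
  have "Tens (Id m) (Tens (tpow X a) (Id r)) \<approx> Tens (Tens (Id m) (tpow X a)) (Id r)"
    using typed.ty_id typed_tpow[OF X] typed.ty_id by (rule mor_eq_sym[OF mor_eq_tens_assoc])
  also have "\<dots> \<propto> Tens (Tens (tpow X a) (Id m)) (Id r)"
    using id_tens_tpow_commute[OF Xm] multiple_refl[OF typed.ty_id] by (rule multiple_tens)
  also have "\<dots> \<approx> Tens (tpow X a) (Id (m + r))"
    using X by (rule tpow_tens_id_tens_id)
  finally show ?thesis .
qed

lemma id_tens_commute_inverse:
  assumes X: "typed n X p q" and Y: "typed n Y q p"
    and XY: "Comp X Y \<approx> Id q" and YX: "Comp Y X \<approx> Id p"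
    and Xm: "Tens (Id m) X \<propto> Tens X (Id m)"
  shows "Tens (Id m) Y \<propto> Tens Y (Id m)"
proof -
  obtain c where twist: "Tens (Id m) X \<approx> Scal c (Tens X (Id m))"
    using Xm unfolding scalar_multiple_def by blast
  have mX: "typed n (Tens (Id m) X) (m + p) (m + q)"
    using typed.ty_id X by (rule typed.ty_tens)
  have mY: "typed n (Tens (Id m) Y) (m + q) (m + p)"
    using typed.ty_id Y by (rule typed.ty_tens)
  have Xm_ty: "typed n (Tens X (Id m)) (m + p) (m + q)"
    using typed.ty_tens[OF X typed.ty_id] by (simp add: add.commute)
  have Ym_ty: "typed n (Tens Y (Id m)) (m + q) (m + p)"
    using typed.ty_tens[OF Y typed.ty_id] by (simp add: add.commute)
  show ?thesis
  proof (cases "c = 0")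
    case True
    have "Tens (Id m) X \<approx> Zero (m + p) (m + q)"
      using twist scal_zero[OF Xm_ty] unfolding True by (rule mor_eq_trans)
    with mX mY tens_id_inverse(1)[OF Y X YX] have "Tens (Id m) Y \<approx> Zero (m + q) (m + p)"
      by (rule Zero_if_inverse_Zero)
    also have "\<dots> \<propto> Tens Y (Id m)"
      using Ym_ty by (rule Zero_multiple)
    finally show ?thesis .
  next
    case False
    have Xm_mX: "Tens X (Id m) \<propto> Tens (Id m) X"
      using scal_eq_inverse[OF twist False] unfolding scalar_multiple_def by blast
    have "Tens (Id m) Y \<approx> Comp (Id (m + p)) (Tens (Id m) Y)"
      using mor_eq_id_left[OF mY] by (rule mor_eq_sym)
    also have "\<dots> \<approx> Comp (Comp (Tens Y (Id m)) (Tens X (Id m))) (Tens (Id m) Y)"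
      using mor_eq_sym[OF tens_id_inverse(2)[OF Y X YX]] mor_eq_refl[OF mY]
        typed.ty_comp[OF typed.ty_id mY]
      by (rule mor_eq_comp)
    also have "\<dots> \<approx> Comp (Tens Y (Id m)) (Comp (Tens X (Id m)) (Tens (Id m) Y))"
      using mY Xm_ty Ym_ty by (rule mor_eq_comp_assoc)
    also have "\<dots> \<propto> Comp (Tens Y (Id m)) (Comp (Tens (Id m) X) (Tens (Id m) Y))"
      using multiple_refl[OF Ym_ty] multiple_comp[OF Xm_mX multiple_refl[OF mY] typed.ty_comp[OF Xm_ty mY]]
        typed.ty_comp[OF Ym_ty typed.ty_comp[OF Xm_ty mY]]
      by (rule multiple_comp)
    also have "\<dots> \<approx> Comp (Tens Y (Id m)) (Id (m + q))"
      using mor_eq_refl[OF Ym_ty] tens_id_inverse(1)[OF X Y XY]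
        typed.ty_comp[OF Ym_ty typed.ty_comp[OF mX mY]]
      by (rule mor_eq_comp)
    also have "\<dots> \<approx> Tens Y (Id m)"
      using Ym_ty by (rule mor_eq_id_right)
    finally show ?thesis .
  qed
qed

lemma id_tens_F_commute: "Tens (Id m) F \<propto> Tens F (Id m)"
proof -
  have "Tens (Id 1) F \<propto> Tens F (Id 1)"
    using mor_eq_twist unfolding scalar_multiple_def by blast
  then show ?thesis
    by (rule id_tens_commute)
qed

lemma id_tens_G_commute: "Tens (Id m) G \<propto> Tens G (Id m)"
  using typed.ty_F typed.ty_G mor_eq_fg mor_eq_gf id_tens_F_commute
  by (rule id_tens_commute_inverse)

section \<open>Canonical morphisms\<close>

definition to_residue :: "nat \<Rightarrow> 'k mexp" where
  "to_residue x = Tens (tpow F (x div n)) (Id (x mod n))"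

definition from_residue :: "nat \<Rightarrow> 'k mexp" where
  "from_residue y = Tens (tpow G (y div n)) (Id (y mod n))"

definition canonical :: "nat \<Rightarrow> nat \<Rightarrow> 'k mexp" where
  "canonical x y = (if x mod n = y mod n then Comp (from_residue y) (to_residue x) else Zero x y)"

lemma typed_to_residue: "typed n (to_residue x) x (x mod n)"
  using typed.ty_tens[OF typed_F_pow[of n "x div n"] typed.ty_id[of n "x mod n"]]
  by (simp add: to_residue_def)

lemma typed_from_residue: "typed n (from_residue y) (y mod n) y"
  using typed.ty_tens[OF typed_G_pow[of n "y div n"] typed.ty_id[of n "y mod n"]]
  by (simp add: from_residue_def)

lemma typed_canonical: "typed n (canonical x y) x y"
proof (cases "x mod n = y mod n")
  case True
  then have "typed n (from_residue y) (x mod n) y"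
    using typed_from_residue[of y] by simp
  then show ?thesis
    using True typed.ty_comp[OF _ typed_to_residue] by (simp add: canonical_def)
qed (simp add: canonical_def typed.ty_zero)

lemma to_residue_comp_from_residue: "Comp (to_residue x) (from_residue x) \<approx> Id (x mod n)"
proof -
  have "Comp (to_residue x) (from_residue x) \<approx> Tens (Comp (tpow F (x div n)) (tpow G (x div n))) (Id (x mod n))"
    unfolding to_residue_def from_residue_def using typed_F_pow typed_G_pow by (rule tens_comp_id_right)
  also have "\<dots> \<approx> Tens (Id 0) (Id (x mod n))"
    using tpow_comp_tpow[OF typed.ty_F typed.ty_G mor_eq_fg] mor_eq_refl[OF typed.ty_id]
    by (simp add: mor_eq_tens)
  also have "\<dots> \<approx> Id (x mod n)"
    using typed.ty_id by (rule mor_eq_unit_left)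
  finally show ?thesis .
qed

lemma from_residue_comp_to_residue: "Comp (from_residue x) (to_residue x) \<approx> Id x"
proof -
  have "Comp (from_residue x) (to_residue x) \<approx> Tens (Comp (tpow G (x div n)) (tpow F (x div n))) (Id (x mod n))"
    unfolding to_residue_def from_residue_def using typed_G_pow typed_F_pow by (rule tens_comp_id_right)
  also have "\<dots> \<approx> Tens (Id (x div n * n)) (Id (x mod n))"
    using tpow_comp_tpow[OF typed.ty_G typed.ty_F mor_eq_gf] mor_eq_refl[OF typed.ty_id]
    by (rule mor_eq_tens)
  also have "\<dots> \<approx> Id x"
    using mor_eq_id_tens[of "x div n * n" "x mod n"] by simp
  finally show ?thesis .
qed

lemma to_residue_from_residue_cancel:
  assumes d: "typed n d x (y mod n)"
  shows "Comp (to_residue y) (Comp (from_residue y) d) \<approx> d"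
proof -
  have "Comp (to_residue y) (Comp (from_residue y) d) \<approx> Comp (Comp (to_residue y) (from_residue y)) d"
    using d typed_from_residue typed_to_residue by (rule mor_eq_sym[OF mor_eq_comp_assoc])
  also have "\<dots> \<approx> Comp (Id (y mod n)) d"
    using to_residue_comp_from_residue mor_eq_refl[OF d]
      typed.ty_comp[OF typed.ty_comp[OF typed_to_residue typed_from_residue] d]
    by (rule mor_eq_comp)
  also have "\<dots> \<approx> d"
    using d by (rule mor_eq_id_left)
  finally show ?thesis .
qed

lemma canonical_comp: "Comp (canonical y z) (canonical x y) \<propto> canonical x z"
proof (cases "x mod n = y mod n \<and> y mod n = z mod n")
  case True
  have up: "typed n (from_residue z) (y mod n) z"
    using typed_from_residue[of z] True by simp
  have down: "typed n (to_residue x) x (y mod n)"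
    using typed_to_residue[of x] True by simp
  have "Comp (canonical y z) (canonical x y)
      = Comp (Comp (from_residue z) (to_residue y)) (Comp (from_residue y) (to_residue x))"
    using True by (simp add: canonical_def)
  also have "\<dots> \<approx> Comp (from_residue z) (Comp (to_residue y) (Comp (from_residue y) (to_residue x)))"
    using typed.ty_comp[OF typed_from_residue down] typed_to_residue up by (rule mor_eq_comp_assoc)
  also have "\<dots> \<approx> Comp (from_residue z) (to_residue x)"
    using mor_eq_refl[OF up] to_residue_from_residue_cancel[OF down]
      typed.ty_comp[OF up typed.ty_comp[OF typed_to_residue typed.ty_comp[OF typed_from_residue down]]]
    by (rule mor_eq_comp)
  also have "\<dots> = canonical x z"
    using True by (simp add: canonical_def)
  finally show ?thesis
    by (rule mor_eq_imp_multiple)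
next
  case False
  then have "canonical x y = Zero x y \<or> canonical y z = Zero y z"
    by (auto simp: canonical_def)
  then have "Comp (canonical y z) (canonical x y) \<approx> Zero x z"
    using comp_Zero_left[OF typed_canonical[of x y]] comp_Zero_right[OF typed_canonical[of y z]]
    by auto
  also have "\<dots> \<propto> canonical x z"
    using typed_canonical by (rule Zero_multiple)
  finally show ?thesis .
qed

end

locale D_category_pos = D_category +
  assumes n_pos: "0 < n"
begin

lemma F_pow_tens_id: "Tens (tpow F a) (Id s) \<approx> canonical (a * n + s) s"
proof -
  have div: "(a * n + s) div n = a + s div n" and mod: "(a * n + s) mod n = s mod n"
    using n_pos by simp_all
  have down: "Tens (tpow F a) (to_residue s) \<approx> to_residue (a * n + s)"
    unfolding to_residue_def div mod by (rule tpow_tens_tpow_tens_id[OF typed.ty_F])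
  have "Tens (tpow F a) (Id s) \<approx> Tens (Comp (Id 0) (tpow F a)) (Comp (from_residue s) (to_residue s))"
    using mor_eq_sym[OF mor_eq_id_left[OF typed_F_pow]] mor_eq_sym[OF from_residue_comp_to_residue]
    by (rule mor_eq_tens)
  also have "\<dots> \<approx> Comp (Tens (Id 0) (from_residue s)) (Tens (tpow F a) (to_residue s))"
    using typed.ty_id typed_F_pow typed_from_residue typed_to_residue
    by (rule mor_eq_sym[OF mor_eq_interchange])
  also have "\<dots> \<approx> Comp (from_residue s) (to_residue (a * n + s))"
    using mor_eq_unit_left[OF typed_from_residue] down
      typed.ty_comp[OF typed.ty_tens[OF typed.ty_id typed_from_residue]
        typed.ty_tens[OF typed_F_pow typed_to_residue]]
    by (rule mor_eq_comp)
  also have "\<dots> = canonical (a * n + s) s"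
    using mod by (simp add: canonical_def)
  finally show ?thesis .
qed

lemma G_pow_tens_id: "Tens (tpow G a) (Id s) \<approx> canonical s (a * n + s)"
proof -
  have div: "(a * n + s) div n = a + s div n" and mod: "(a * n + s) mod n = s mod n"
    using n_pos by simp_all
  have up: "Tens (tpow G a) (from_residue s) \<approx> from_residue (a * n + s)"
    unfolding from_residue_def div mod by (rule tpow_tens_tpow_tens_id[OF typed.ty_G])
  have "Tens (tpow G a) (Id s) \<approx> Tens (Comp (tpow G a) (Id 0)) (Comp (from_residue s) (to_residue s))"
    using mor_eq_sym[OF mor_eq_id_right[OF typed_G_pow]] mor_eq_sym[OF from_residue_comp_to_residue]
    by (rule mor_eq_tens)
  also have "\<dots> \<approx> Comp (Tens (tpow G a) (from_residue s)) (Tens (Id 0) (to_residue s))"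
    using typed_G_pow typed.ty_id typed_from_residue typed_to_residue
    by (rule mor_eq_sym[OF mor_eq_interchange])
  also have "\<dots> \<approx> Comp (from_residue (a * n + s)) (to_residue s)"
    using up mor_eq_unit_left[OF typed_to_residue]
      typed.ty_comp[OF typed.ty_tens[OF typed_G_pow typed_from_residue]
        typed.ty_tens[OF typed.ty_id typed_to_residue]]
    by (rule mor_eq_comp)
  also have "\<dots> = canonical s (a * n + s)"
    using mod by (simp add: canonical_def)
  finally show ?thesis .
qed

lemma to_residue_tens_id: "Tens (to_residue x) (Id m) \<approx> canonical (x + m) (x mod n + m)"
proof -
  have "Tens (to_residue x) (Id m) \<approx> Tens (tpow F (x div n)) (Id (x mod n + m))"
    unfolding to_residue_def by (rule tpow_tens_id_tens_id[OF typed.ty_F])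
  also have "\<dots> \<approx> canonical (x div n * n + (x mod n + m)) (x mod n + m)"
    by (rule F_pow_tens_id)
  also have "x div n * n + (x mod n + m) = x + m"
    using div_mult_mod_eq[of x n] by linarith
  finally show ?thesis .
qed

lemma from_residue_tens_id: "Tens (from_residue y) (Id m) \<approx> canonical (y mod n + m) (y + m)"
proof -
  have "Tens (from_residue y) (Id m) \<approx> Tens (tpow G (y div n)) (Id (y mod n + m))"
    unfolding from_residue_def by (rule tpow_tens_id_tens_id[OF typed.ty_G])
  also have "\<dots> \<approx> canonical (y mod n + m) (y div n * n + (y mod n + m))"
    by (rule G_pow_tens_id)
  also have "y div n * n + (y mod n + m) = y + m"
    using div_mult_mod_eq[of y n] by linarith
  finally show ?thesis .
qed

lemma id_tens_to_residue: "Tens (Id m) (to_residue x) \<propto> canonical (m + x) (m + x mod n)"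
proof -
  have "Tens (Id m) (to_residue x) \<propto> Tens (tpow F (x div n)) (Id (m + x mod n))"
    unfolding to_residue_def using id_tens_F_commute by (rule id_tens_tpow_tens_id)
  also have "\<dots> \<approx> canonical (x div n * n + (m + x mod n)) (m + x mod n)"
    by (rule F_pow_tens_id)
  also have "x div n * n + (m + x mod n) = m + x"
    using div_mult_mod_eq[of x n] by linarith
  finally show ?thesis .
qed

lemma id_tens_from_residue: "Tens (Id m) (from_residue y) \<propto> canonical (m + y mod n) (m + y)"
proof -
  have "Tens (Id m) (from_residue y) \<propto> Tens (tpow G (y div n)) (Id (m + y mod n))"
    unfolding from_residue_def using id_tens_G_commute by (rule id_tens_tpow_tens_id)
  also have "\<dots> \<approx> canonical (m + y mod n) (y div n * n + (m + y mod n))"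
    by (rule G_pow_tens_id)
  also have "y div n * n + (m + y mod n) = m + y"
    using div_mult_mod_eq[of y n] by linarith
  finally show ?thesis .
qed

lemma canonical_tens_id: "Tens (canonical x y) (Id m) \<propto> canonical (x + m) (y + m)"
proof (cases "x mod n = y mod n")
  case True
  have up: "typed n (from_residue y) (x mod n) y"
    using typed_from_residue[of y] True by simp
  have up_m: "Tens (from_residue y) (Id m) \<approx> canonical (x mod n + m) (y + m)"
    using from_residue_tens_id[of y m] True by simp
  have "Tens (canonical x y) (Id m) \<approx> Comp (Tens (from_residue y) (Id m)) (Tens (to_residue x) (Id m))"
    using True mor_eq_sym[OF tens_comp_id_right[OF up typed_to_residue]] by (simp add: canonical_def)
  also have "\<dots> \<approx> Comp (canonical (x mod n + m) (y + m)) (canonical (x + m) (x mod n + m))"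
    using up_m to_residue_tens_id
      typed.ty_comp[OF typed.ty_tens[OF up typed.ty_id] typed.ty_tens[OF typed_to_residue typed.ty_id]]
    by (rule mor_eq_comp)
  also have "\<dots> \<propto> canonical (x + m) (y + m)"
    by (rule canonical_comp)
  finally show ?thesis .
next
  case False
  have "Tens (canonical x y) (Id m) \<approx> Zero (x + m) (y + m)"
    using False tens_Zero_left[OF typed.ty_id] by (simp add: canonical_def)
  also have "\<dots> \<propto> canonical (x + m) (y + m)"
    using typed_canonical by (rule Zero_multiple)
  finally show ?thesis .
qed

lemma id_tens_canonical: "Tens (Id m) (canonical x y) \<propto> canonical (m + x) (m + y)"
proof (cases "x mod n = y mod n")
  case True
  have up: "typed n (from_residue y) (x mod n) y"
    using typed_from_residue[of y] True by simp
  have m_up: "Tens (Id m) (from_residue y) \<propto> canonical (m + x mod n) (m + y)"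
    using id_tens_from_residue[of m y] True by simp
  have "Tens (Id m) (canonical x y) \<approx> Comp (Tens (Id m) (from_residue y)) (Tens (Id m) (to_residue x))"
    using True mor_eq_sym[OF tens_comp_id_left[OF up typed_to_residue]] by (simp add: canonical_def)
  also have "\<dots> \<propto> Comp (canonical (m + x mod n) (m + y)) (canonical (m + x) (m + x mod n))"
    using m_up id_tens_to_residue
      typed.ty_comp[OF typed.ty_tens[OF typed.ty_id up] typed.ty_tens[OF typed.ty_id typed_to_residue]]
    by (rule multiple_comp)
  also have "\<dots> \<propto> canonical (m + x) (m + y)"
    by (rule canonical_comp)
  finally show ?thesis .
next
  case False
  have "Tens (Id m) (canonical x y) \<approx> Zero (m + x) (m + y)"
    using False tens_Zero_right[OF typed.ty_id] by (simp add: canonical_def)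
  also have "\<dots> \<propto> canonical (m + x) (m + y)"
    using typed_canonical by (rule Zero_multiple)
  finally show ?thesis .
qed

lemma canonical_tens: "Tens (canonical x y) (canonical x' y') \<propto> canonical (x + x') (y + y')"
proof -
  have "Tens (canonical x y) (canonical x' y')
      \<approx> Comp (Tens (canonical x y) (Id y')) (Tens (Id x) (canonical x' y'))"
    using typed_canonical typed_canonical by (rule tens_eq_comp)
  also have "\<dots> \<propto> Comp (canonical (x + y') (y + y')) (canonical (x + x') (x + y'))"
    using canonical_tens_id id_tens_canonical
      typed.ty_comp[OF typed.ty_tens[OF typed_canonical typed.ty_id]
        typed.ty_tens[OF typed.ty_id typed_canonical]]
    by (rule multiple_comp)
  also have "\<dots> \<propto> canonical (x + x') (y + y')"
    by (rule canonical_comp)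
  finally show ?thesis .
qed

lemma typed_imp_multiple_canonical: "typed n e x y \<Longrightarrow> e \<propto> canonical x y"
proof (induction rule: typed.induct)
  case (ty_id m)
  have "Id m \<approx> canonical m m"
    using mor_eq_sym[OF from_residue_comp_to_residue] by (simp add: canonical_def)
  then show ?case
    by (rule mor_eq_imp_multiple)
next
  case ty_F
  have "F \<approx> Tens F (Id 0)"
    using mor_eq_unit_right[OF typed.ty_F] by (rule mor_eq_sym)
  also have "\<dots> \<approx> Tens (tpow F 1) (Id 0)"
    using mor_eq_sym[OF mor_eq_unit_right[OF typed.ty_F]] mor_eq_refl[OF typed.ty_id]
    by (simp add: mor_eq_tens)
  also have "\<dots> \<approx> canonical (1 * n + 0) 0"
    by (rule F_pow_tens_id)
  finally show ?case
    by (simp add: mor_eq_imp_multiple)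
next
  case ty_G
  have "G \<approx> Tens G (Id 0)"
    using mor_eq_unit_right[OF typed.ty_G] by (rule mor_eq_sym)
  also have "\<dots> \<approx> Tens (tpow G 1) (Id 0)"
    using mor_eq_sym[OF mor_eq_unit_right[OF typed.ty_G]] mor_eq_refl[OF typed.ty_id]
    by (simp add: mor_eq_tens)
  also have "\<dots> \<approx> canonical 0 (1 * n + 0)"
    by (rule G_pow_tens_id)
  finally show ?case
    by (simp add: mor_eq_imp_multiple)
next
  case (ty_comp a y z b x)
  have "Comp a b \<propto> Comp (canonical y z) (canonical x y)"
    using ty_comp.IH typed.ty_comp[OF ty_comp.hyps] by (rule multiple_comp)
  also have "\<dots> \<propto> canonical x z"
    by (rule canonical_comp)
  finally show ?case .
next
  case (ty_tens a x y b x' y')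
  have "Tens a b \<propto> Tens (canonical x y) (canonical x' y')"
    using ty_tens.IH by (rule multiple_tens)
  also have "\<dots> \<propto> canonical (x + x') (y + y')"
    by (rule canonical_tens)
  finally show ?case .
next
  case (ty_scal a x y c)
  have "Scal c a \<propto> a"
    using ty_scal.hyps by (rule scal_multiple)
  also have "\<dots> \<propto> canonical x y"
    by (rule ty_scal.IH)
  finally show ?case .
next
  case (ty_add a x y b)
  show ?case
    using ty_add.IH by (rule multiple_add)
next
  case (ty_zero x y)
  show ?case
    using typed_canonical by (rule Zero_multiple)
qed

lemma F_pow_eq_canonical: "tpow F l \<approx> canonical (l * n) 0"
proof -
  have "tpow F l \<approx> Tens (tpow F l) (Id 0)"
    using mor_eq_unit_right[OF typed_F_pow] by (rule mor_eq_sym)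
  also have "\<dots> \<approx> canonical (l * n + 0) 0"
    by (rule F_pow_tens_id)
  finally show ?thesis
    by simp
qed

end

theorem mainTheorem11:
  fixes \<zeta> :: "'k :: {alg_closed_field, field_char_0}"
    and n k l :: nat
  assumes "n \<ge> 1"
    and "k = l * n"
  shows "typed n (fpow l :: 'k mexp) k 0 \<and>
         (\<forall>e :: 'k mexp. typed n e k 0 \<longrightarrow> (\<exists>c :: 'k. eqv n \<zeta> e (Scal c (fpow l)) k 0))"
proof -
  interpret D_category_pos n \<zeta>
    using assms(1) by unfold_locales simp
  have "typed n (fpow l :: 'k mexp) k 0"
    using typed_F_pow assms(2) by (simp add: fpow_eq_tpow)
  moreover have "\<exists>c. eqv n \<zeta> e (Scal c (fpow l)) k 0" if e: "typed n e k 0" for e :: "'k mexp"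
  proof -
    have "e \<propto> canonical k 0"
      using e by (rule typed_imp_multiple_canonical)
    also have "\<dots> \<approx> fpow l"
      using mor_eq_sym[OF F_pow_eq_canonical] assms(2) by (simp add: fpow_eq_tpow)
    finally obtain c where "e \<approx> Scal c (fpow l)"
      unfolding scalar_multiple_def by blast
    then show ?thesis
      using e eqv_iff_mor_eq by blast
  qed
  ultimately show ?thesis
    by blast
qed

end
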